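(* Let $G$ be a finite group. Then $G/[\delta_i,G]$ is a nested group for every integer $i\ge 1$. Moreover, $G$ is nested if and only if $\delta_\infty=1$.
   Context: All groups are finite. For $\chi\in\mathrm{Irr}(G)$, the center of $\chi$ is $Z(\chi)=\{g\in G : |\chi(g)|=\chi(1)\}$. A group is nested if for any two of its irreducible characters $\chi,\psi$ either $Z(\chi)\le Z(\psi)$ or $Z(\psi)\le Z(\chi)$. For a normal subgroup $N$ of $G$, $\mathrm{Irr}(G\mid N)$ denotes the set of $\chi\in\mathrm{Irr}(G)$ with $N\not\le\ker(\chi)$. Define $\delta_1=G$ and $\delta_{i+1}=\prod_{\chi\in\mathrm{Irr}(G\mid[\delta_i,G])}Z(\chi)$ for $i\ge 1$, with the convention that an empty product is the trivial subgroup. This is a descending chain of normal subgroups which stabilizes; $\delta_\infty$ denotes its terminal term. *)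

theory Defs
  imports "HOL-Algebra.Algebra" "Jordan_Normal_Form.Matrix"
begin

definition mat_trace :: "complex mat \<Rightarrow> complex" where
  "mat_trace A = (\<Sum>i<dim_row A. A $$ (i, i))"

definition rep :: "('a, 'b) monoid_scheme \<Rightarrow> nat \<Rightarrow> ('a \<Rightarrow> complex mat) \<Rightarrow> bool" where
  "rep G n \<rho> \<longleftrightarrow>
     (\<forall>g\<in>carrier G. \<rho> g \<in> carrier_mat n n) \<and>
     (\<forall>g\<in>carrier G. \<forall>h\<in>carrier G. \<rho> (g \<otimes>\<^bsub>G\<^esub> h) = \<rho> g * \<rho> h) \<and>
     \<rho> \<one>\<^bsub>G\<^esub> = 1\<^sub>m n"

definition invariant_subspace ::
  "('a, 'b) monoid_scheme \<Rightarrow> nat \<Rightarrow> ('a \<Rightarrow> complex mat) \<Rightarrow> complex vec set \<Rightarrow> bool" where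
  "invariant_subspace G n \<rho> W \<longleftrightarrow>
     W \<subseteq> carrier_vec n \<and> 0\<^sub>v n \<in> W \<and>
     (\<forall>v\<in>W. \<forall>w\<in>W. v + w \<in> W) \<and>
     (\<forall>c. \<forall>v\<in>W. c \<cdot>\<^sub>v v \<in> W) \<and>
     (\<forall>g\<in>carrier G. \<forall>v\<in>W. \<rho> g *\<^sub>v v \<in> W)"

definition irr_rep :: "('a, 'b) monoid_scheme \<Rightarrow> nat \<Rightarrow> ('a \<Rightarrow> complex mat) \<Rightarrow> bool" where
  "irr_rep G n \<rho> \<longleftrightarrow> rep G n \<rho> \<and> n > 0 \<and>
     (\<forall>W. invariant_subspace G n \<rho> W \<longrightarrow> W = {0\<^sub>v n} \<or> W = carrier_vec n)"

definition Irr :: "('a, 'b) monoid_scheme \<Rightarrow> ('a \<Rightarrow> complex) set" where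
  "Irr G = {\<chi>. \<exists>n \<rho>. irr_rep G n \<rho> \<and>
               \<chi> = (\<lambda>g. if g \<in> carrier G then mat_trace (\<rho> g) else 0)}"

definition char_center :: "('a, 'b) monoid_scheme \<Rightarrow> ('a \<Rightarrow> complex) \<Rightarrow> 'a set" where
  "char_center G \<chi> = {g \<in> carrier G. cmod (\<chi> g) = cmod (\<chi> \<one>\<^bsub>G\<^esub>)}"

definition char_kernel :: "('a, 'b) monoid_scheme \<Rightarrow> ('a \<Rightarrow> complex) \<Rightarrow> 'a set" where
  "char_kernel G \<chi> = {g \<in> carrier G. \<chi> g = \<chi> \<one>\<^bsub>G\<^esub>}"

definition Irr_over :: "('a, 'b) monoid_scheme \<Rightarrow> 'a set \<Rightarrow> ('a \<Rightarrow> complex) set" where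
  "Irr_over G N = {\<chi> \<in> Irr G. \<not> N \<subseteq> char_kernel G \<chi>}"

definition nested_group :: "('a, 'b) monoid_scheme \<Rightarrow> bool" where
  "nested_group G \<longleftrightarrow> (\<forall>\<chi>\<in>Irr G. \<forall>\<psi>\<in>Irr G.
      char_center G \<chi> \<subseteq> char_center G \<psi> \<or> char_center G \<psi> \<subseteq> char_center G \<chi>)"

definition commutator_subgroup :: "('a, 'b) monoid_scheme \<Rightarrow> 'a set \<Rightarrow> 'a set \<Rightarrow> 'a set" where
  "commutator_subgroup G H K = generate G
     (\<Union>h\<in>H. \<Union>k\<in>K. {h \<otimes>\<^bsub>G\<^esub> k \<otimes>\<^bsub>G\<^esub> inv\<^bsub>G\<^esub> h \<otimes>\<^bsub>G\<^esub> inv\<^bsub>G\<^esub> k})"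

text \<open>delta G i is \<delta>_i for i \<ge> 1 (delta G 0 is set to carrier G as a dummy).
  The product of subgroups is the subgroup generated by their union; the empty
  product is generate G {} = {1}.\<close>
primrec delta :: "('a, 'b) monoid_scheme \<Rightarrow> nat \<Rightarrow> 'a set" where
  "delta G 0 = carrier G"
| "delta G (Suc i) = (if i = 0 then carrier G else
     generate G (\<Union>\<chi>\<in>Irr_over G (commutator_subgroup G (delta G i) (carrier G)).
                    char_center G \<chi>))"

definition delta_inf :: "('a, 'b) monoid_scheme \<Rightarrow> 'a set" where
  "delta_inf G = delta G (LEAST k. 1 \<le> k \<and> (\<forall>j\<ge>k. delta G j = delta G k))"

end

theory Submission
  imports Defs "Jordan_Normal_Form.Schur_Decomposition"
begin

(* If the representation rho affords chi in Irr(G), then |chi(g)| = chi(1) exactly when rho(g) is a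
   scalar matrix: rho(g) is similar to a triangular matrix whose diagonal entries are roots of unity
   (rho(g) has finite order), the trace attains norm chi(1) only if these entries coincide, and a
   triangular matrix of finite order with constant diagonal is scalar.  With Schur's lemma this
   gives [H,G] <= ker chi <-> H <= Z(chi).  Hence if [delta_i,G] <= ker chi and k >= 1 is least with
   [delta_k,G] <= ker chi, then Z(chi) = delta_k: one inclusion is the equivalence, and for k > 1
   the character chi lies in Irr(G | [delta_(k-1),G]), so Z(chi) is one of the factors of delta_k.

   The irreducible characters of G/[delta_i,G] are inflated from characters of G with [delta_i,G]
   in the kernel, so their centers are images of members of the descending chain (delta_k); thus
   G/[delta_i,G] is nested, and if delta_inf = 1 every character qualifies and G is nested.
   Conversely, let G be nested and delta_K = delta_(K+1).  The centers of the characters in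
   Irr(G | [delta_K,G]) form a finite chain; its largest member Z(chi) is a subgroup containing
   their product delta_(K+1) = delta_K, so [delta_K,G] <= ker chi, which is absurd unless
   Irr(G | [delta_K,G]) is empty, i.e. delta_(K+1) = 1. *)

section \<open>Matrices of finite order\<close>

lemma mat_trace_mult_comm:
  assumes "A \<in> carrier_mat n k" and "B \<in> carrier_mat k n"
  shows "mat_trace (A * B) = mat_trace (B * A)"
proof -
  have "mat_trace (A * B) = (\<Sum>i<n. \<Sum>j<k. A $$ (i, j) * B $$ (j, i))"
    using assms by (auto simp: mat_trace_def scalar_prod_def atLeast0LessThan)
  also have "\<dots> = (\<Sum>j<k. \<Sum>i<n. B $$ (j, i) * A $$ (i, j))"
    by (subst sum.swap) (simp add: mult.commute)
  also have "\<dots> = mat_trace (B * A)"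
    using assms by (auto simp: mat_trace_def scalar_prod_def atLeast0LessThan)
  finally show ?thesis .
qed

lemma similar_mat_wit_trace:
  assumes "A \<in> carrier_mat n n" and "similar_mat_wit A B P Q"
  shows "mat_trace A = mat_trace B"
proof -
  note sim = similar_mat_witD2[OF assms]
  have "mat_trace A = mat_trace (P * (B * Q))"
    using sim by (simp add: assoc_mult_mat[of P n n B n Q n])
  also have "\<dots> = mat_trace (B * Q * P)"
    using sim by (intro mat_trace_mult_comm) auto
  also have "B * Q * P = B"
    using sim by (simp add: assoc_mult_mat[of B n n Q n P n])
  finally show ?thesis .
qed

lemma mat_trace_smult_one [simp]: "mat_trace (c \<cdot>\<^sub>m 1\<^sub>m n) = c * of_nat n"
  by (simp add: mat_trace_def)

lemma scalar_mat_mult: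
  fixes A :: "'a::comm_semiring_1 mat"
  assumes "A \<in> carrier_mat n n"
  shows "(c \<cdot>\<^sub>m 1\<^sub>m n) * A = c \<cdot>\<^sub>m A" and "A * (c \<cdot>\<^sub>m 1\<^sub>m n) = c \<cdot>\<^sub>m A"
  using mult_smult_assoc_mat[OF one_carrier_mat assms] mult_smult_distrib[OF assms one_carrier_mat] assms
  by auto

lemma smult_eq_one_mat_imp_scalar:
  fixes M :: "'a::field mat"
  assumes M: "M \<in> carrier_mat n n" and eq: "c \<cdot>\<^sub>m M = 1\<^sub>m n"
  shows "M = inverse c \<cdot>\<^sub>m 1\<^sub>m n"
proof (rule eq_matI)
  fix i j
  assume "i < dim_row (inverse c \<cdot>\<^sub>m 1\<^sub>m n)" "j < dim_col (inverse c \<cdot>\<^sub>m 1\<^sub>m n)"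
  then have ij: "i < n" "j < n"
    by auto
  have "c * M $$ (i, i) = 1" "c * M $$ (i, j) = (if i = j then 1 else 0)"
    using arg_cong[OF eq, of "\<lambda>A. A $$ (i, i)"] arg_cong[OF eq, of "\<lambda>A. A $$ (i, j)"] M ij
    by auto
  then show "M $$ (i, j) = (inverse c \<cdot>\<^sub>m 1\<^sub>m n) $$ (i, j)"
    using ij by (auto simp: field_simps eq_divide_eq)
qed (use M in auto)

lemma upper_triangular_mult_index:
  fixes A B :: "'a::semiring_0 mat"
  assumes "A \<in> carrier_mat n n" and "B \<in> carrier_mat n n"
    and "upper_triangular A" "upper_triangular B" and "j \<le> i" "i < n"
  shows "(A * B) $$ (i, j) = (if i = j then A $$ (i, i) * B $$ (i, i) else 0)"
proof -
  have entry: "A $$ (i, l) * B $$ (l, j) = (if l = i \<and> i = j then A $$ (i, i) * B $$ (i, i) else 0)"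
    if "l < n" for l
  proof -
    consider "l < i" | "j < l" | "l = i" "i = j"
      using \<open>j \<le> i\<close> by linarith
    then show ?thesis
      using assms that upper_triangularD[of A l i] upper_triangularD[of B j l] by cases auto
  qed
  have "(A * B) $$ (i, j) = (\<Sum>l<n. A $$ (i, l) * B $$ (l, j))"
    using assms by (auto simp: scalar_prod_def atLeast0LessThan intro!: sum.cong)
  also have "\<dots> = (\<Sum>l<n. if l = i \<and> i = j then A $$ (i, i) * B $$ (i, i) else 0)"
    using entry by simp
  finally show ?thesis
    using \<open>i < n\<close> by (simp add: sum.delta)
qed

lemma upper_triangular_mult:
  fixes A B :: "'a::semiring_0 mat"
  assumes "A \<in> carrier_mat n n" "B \<in> carrier_mat n n" "upper_triangular A" "upper_triangular B"
  shows "upper_triangular (A * B)"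
  using upper_triangular_mult_index[OF assms] assms by (intro upper_triangularI) auto

lemma upper_triangular_pow:
  fixes B :: "'a::semiring_1 mat"
  assumes B: "B \<in> carrier_mat n n" and "upper_triangular B"
  shows "upper_triangular (B ^\<^sub>m k) \<and> (\<forall>i<n. (B ^\<^sub>m k) $$ (i, i) = B $$ (i, i) ^ k)"
proof (induction k)
  case (Suc k)
  have "B ^\<^sub>m k \<in> carrier_mat n n"
    using B by simp
  with Suc assms show ?case
    using upper_triangular_mult upper_triangular_mult_index[of "B ^\<^sub>m k" n B]
    by (auto simp: power_commutes)
qed (use B in auto)

(* Equality case of the triangle inequality: for the unit u = (sum of the d j) / n, the real parts
   of the d j * cnj u are at most 1 and sum to n, so all of them equal 1. *)
lemma unimodular_sum_norm_eq_imp_const: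
  fixes d :: "nat \<Rightarrow> complex"
  assumes "n > 0" and norm_d: "\<And>j. j < n \<Longrightarrow> cmod (d j) = 1"
    and norm_sum: "cmod (\<Sum>j<n. d j) = n" and "i < n"
  shows "d i = (\<Sum>j<n. d j) / n"
proof -
  define u where "u = (\<Sum>j<n. d j) / n"
  have "cmod u = 1"
    using norm_sum \<open>n > 0\<close> by (simp add: u_def norm_divide)
  then have u_cnj: "u * cnj u = 1"
    using complex_norm_square[of u] by simp
  have Re_le: "Re (d j * cnj u) \<le> 1" if "j < n" for j
    using complex_Re_le_cmod[of "d j * cnj u"] norm_d[OF that] \<open>cmod u = 1\<close>
    by (simp add: norm_mult)
  have "(\<Sum>j<n. Re (d j * cnj u)) = Re ((\<Sum>j<n. d j) * cnj u)"
    by (simp add: sum_distrib_right)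
  also have "(\<Sum>j<n. d j) * cnj u = n"
    using u_cnj \<open>n > 0\<close> by (simp add: u_def field_simps)
  finally have "(\<Sum>j<n. 1 - Re (d j * cnj u)) = 0"
    by (simp add: sum_subtractf)
  then have Re_i: "Re (d i * cnj u) = 1"
    using sum_nonneg_eq_0_iff[of "{..<n}" "\<lambda>j. 1 - Re (d j * cnj u)"] Re_le \<open>i < n\<close> by simp
  moreover have "cmod (d i * cnj u) = 1"
    using norm_d[OF \<open>i < n\<close>] \<open>cmod u = 1\<close> by (simp add: norm_mult)
  ultimately have "Im (d i * cnj u) = 0"
    using cmod_power2[of "d i * cnj u"] by simp
  with Re_i have "d i * cnj u = 1"
    by (simp add: complex_eq_iff)
  then have "d i = (d i * cnj u) * u"
    using u_cnj by (metis mult.assoc mult.commute mult_1_right)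
  with \<open>d i * cnj u = 1\<close> show ?thesis
    by (simp add: u_def)
qed

(* mat_geom_sum B c n k is the sum of c ^ (k - 1 - j) * B ^ j over j < k, the cofactor of B - c
   in B ^ k - c ^ k. *)
primrec mat_geom_sum :: "'a::comm_ring_1 mat \<Rightarrow> 'a \<Rightarrow> nat \<Rightarrow> nat \<Rightarrow> 'a mat" where
  "mat_geom_sum B c n 0 = 0\<^sub>m n n"
| "mat_geom_sum B c n (Suc k) = c \<cdot>\<^sub>m mat_geom_sum B c n k + B ^\<^sub>m k"

lemma mat_geom_sum_carrier [simp]: "B \<in> carrier_mat n n \<Longrightarrow> mat_geom_sum B c n k \<in> carrier_mat n n"
  by (induction k) auto

lemma mat_geom_sum_upper_triangular:
  assumes B: "B \<in> carrier_mat n n" "upper_triangular B" and diag: "\<And>i. i < n \<Longrightarrow> B $$ (i, i) = c"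
  shows "upper_triangular (mat_geom_sum B c n k) \<and>
    (\<forall>i<n. mat_geom_sum B c n k $$ (i, i) = of_nat k * c ^ (k - 1))"
proof (induction k)
  case (Suc k)
  let ?S = "mat_geom_sum B c n k"
  have carr: "B ^\<^sub>m k \<in> carrier_mat n n" "?S \<in> carrier_mat n n"
    using B by auto
  then have entry: "mat_geom_sum B c n (Suc k) $$ (i, j) = c * ?S $$ (i, j) + (B ^\<^sub>m k) $$ (i, j)"
    if "i < n" "j < n" for i j
    using that carrier_matD[OF carr(1)] carrier_matD[OF carr(2)] by simp
  have pow: "upper_triangular (B ^\<^sub>m k)" "\<forall>i<n. (B ^\<^sub>m k) $$ (i, i) = c ^ k"
    using upper_triangular_pow[OF B, of k] diag by auto
  show ?case
  proof (intro conjI allI impI upper_triangularI)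
    fix i j
    assume "j < i" "i < dim_row (mat_geom_sum B c n (Suc k))"
    then show "mat_geom_sum B c n (Suc k) $$ (i, j) = 0"
      using entry[of i j] Suc pow carr by (auto dest!: upper_triangularD)
  next
    fix i
    assume "i < n"
    then show "mat_geom_sum B c n (Suc k) $$ (i, i) = of_nat (Suc k) * c ^ (Suc k - 1)"
      using entry[of i i] Suc pow by (cases k) (auto simp: algebra_simps)
  qed
qed auto

lemma mat_geom_sum_mult:
  assumes B: "B \<in> carrier_mat n n"
  shows "mat_geom_sum B c n k * (B - c \<cdot>\<^sub>m 1\<^sub>m n) = B ^\<^sub>m k - c ^ k \<cdot>\<^sub>m 1\<^sub>m n"
proof (induction k)
  case 0
  show ?case
    using B by (intro eq_matI) (auto simp: scalar_prod_def)
next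
  case (Suc k)
  let ?S = "mat_geom_sum B c n k" and ?D = "B - c \<cdot>\<^sub>m 1\<^sub>m n"
  have carr: "?S \<in> carrier_mat n n" "B ^\<^sub>m k \<in> carrier_mat n n" "?D \<in> carrier_mat n n"
    using B by auto
  have "mat_geom_sum B c n (Suc k) * ?D = c \<cdot>\<^sub>m (?S * ?D) + B ^\<^sub>m k * ?D"
    using carr by (simp add: add_mult_distrib_mat[of _ n n] mult_smult_assoc_mat)
  also have "B ^\<^sub>m k * ?D = B ^\<^sub>m Suc k - c \<cdot>\<^sub>m B ^\<^sub>m k"
    using carr B by (simp add: mult_minus_distrib_mat[of _ n n] scalar_mat_mult)
  finally show ?case
    using Suc carr B by (intro eq_matI) (auto simp: algebra_simps)
qed

(* With S = mat_geom_sum B c n m we get S * (B - c) = B ^ m - c ^ m = 0, and S is invertible because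
   its diagonal entries m * c ^ (m - 1) do not vanish in characteristic 0. *)
lemma upper_triangular_pow_eq_one_imp_scalar:
  fixes B :: "'a::{idom,ring_char_0} mat"
  assumes B: "B \<in> carrier_mat n n" "upper_triangular B"
    and diag: "\<And>i. i < n \<Longrightarrow> B $$ (i, i) = c"
    and pow: "B ^\<^sub>m m = 1\<^sub>m n" and "m > 0"
  shows "B = c \<cdot>\<^sub>m 1\<^sub>m n"
proof (cases "n = 0")
  case True
  with B show ?thesis
    by (intro eq_matI) auto
next
  case False
  have "c ^ m = 1"
    using upper_triangular_pow[OF B, of m] diag[of 0] pow False by auto
  let ?S = "mat_geom_sum B c n m"
  have S: "?S \<in> carrier_mat n n"
    using B by simp
  have S_ut: "upper_triangular ?S" and S_diag: "\<forall>i<n. ?S $$ (i, i) = of_nat m * c ^ (m - 1)"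
    using mat_geom_sum_upper_triangular[OF B diag, of m] by auto
  have "diag_mat ?S = replicate n (of_nat m * c ^ (m - 1))"
    using S S_diag by (intro nth_equalityI) (auto simp: diag_mat_def)
  then have "det ?S = (of_nat m * c ^ (m - 1)) ^ n"
    using det_upper_triangular[OF S_ut S] by simp
  then have "det ?S \<noteq> 0"
    using \<open>c ^ m = 1\<close> \<open>m > 0\<close> by (auto simp: power_0_left)
  have D: "B - c \<cdot>\<^sub>m 1\<^sub>m n \<in> carrier_mat n n"
    using B by auto
  have "?S * (B - c \<cdot>\<^sub>m 1\<^sub>m n) = 0\<^sub>m n n"
    using mat_geom_sum_mult[OF B(1), of c m] pow \<open>c ^ m = 1\<close> by (intro eq_matI) auto
  then have "(adj_mat ?S * ?S) * (B - c \<cdot>\<^sub>m 1\<^sub>m n) = 0\<^sub>m n n"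
    using assoc_mult_mat[OF adj_mat(1)[OF S] S D] right_mult_zero_mat[OF adj_mat(1)[OF S]]
    by simp
  then have "det ?S \<cdot>\<^sub>m (B - c \<cdot>\<^sub>m 1\<^sub>m n) = 0\<^sub>m n n"
    using adj_mat(3)[OF S] scalar_mat_mult(1)[OF D] by simp
  with \<open>det ?S \<noteq> 0\<close> show ?thesis
    using B by (intro eq_matI) (auto simp: mat_eq_iff)
qed

lemma finite_order_trace_norm_imp_scalar:
  fixes A :: "complex mat"
  assumes A: "A \<in> carrier_mat n n" and pow: "A ^\<^sub>m m = 1\<^sub>m n" and "m > 0"
    and trace: "cmod (mat_trace A) = n"
  shows "\<exists>c. A = c \<cdot>\<^sub>m 1\<^sub>m n"
proof (cases "n = 0")
  case True
  with A show ?thesis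
    by (auto intro!: exI[of _ 1] eq_matI)
next
  case False
  obtain es where "char_poly A = (\<Prod>a\<leftarrow>es. [:- a, 1:])"
    using char_poly_factorized[OF A] by auto
  then obtain B where B: "B \<in> carrier_mat n n" "upper_triangular B" and "similar_mat A B"
    using schur_decomposition_exists[OF A] by blast
  then obtain P Q where sim: "similar_mat_wit A B P Q"
    unfolding similar_mat_def by blast
  note PQ = similar_mat_witD2[OF A sim]
  have "B ^\<^sub>m m = Q * A ^\<^sub>m m * P"
    using similar_mat_wit_pow_id[OF similar_mat_wit_sym[OF sim]] .
  also have "\<dots> = 1\<^sub>m n"
    using pow PQ by simp
  finally have B_pow: "B ^\<^sub>m m = 1\<^sub>m n" .
  have unit: "cmod (B $$ (i, i)) = 1" if "i < n" for i
  proof -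
    have "B $$ (i, i) ^ m = 1"
      using upper_triangular_pow[OF B, of m] B_pow that by auto
    then show ?thesis
      using power_eq_1_iff \<open>m > 0\<close> by blast
  qed
  have "mat_trace B = (\<Sum>i<n. B $$ (i, i))"
    using B by (simp add: mat_trace_def)
  moreover have "cmod (mat_trace B) = n"
    using trace similar_mat_wit_trace[OF A sim] by simp
  ultimately have "B $$ (i, i) = mat_trace B / n" if "i < n" for i
    using unimodular_sum_norm_eq_imp_const[of n "\<lambda>i. B $$ (i, i)" i] unit that False by simp
  then have "B = (mat_trace B / n) \<cdot>\<^sub>m 1\<^sub>m n"
    using upper_triangular_pow_eq_one_imp_scalar[OF B _ B_pow \<open>m > 0\<close>] by blast
  then have "A = P * ((mat_trace B / n) \<cdot>\<^sub>m 1\<^sub>m n) * Q"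
    using PQ(3) by simp
  also have "\<dots> = (mat_trace B / n) \<cdot>\<^sub>m (P * Q)"
    using PQ by (simp add: scalar_mat_mult mult_smult_assoc_mat)
  finally show ?thesis
    using PQ by auto
qed

lemma mat_has_eigenvalue:
  fixes A :: "complex mat"
  assumes A: "A \<in> carrier_mat n n" and "n > 0"
  obtains e where "eigenvalue A e"
proof -
  obtain es where es: "char_poly A = (\<Prod>a\<leftarrow>es. [:- a, 1:])" and "length es = n"
    using char_poly_factorized[OF A] by auto
  with \<open>n > 0\<close> obtain e where "e \<in> set es"
    by (cases es) auto
  then have "poly (char_poly A) e = 0"
    unfolding es by (induction es) auto
  then show ?thesis
    using eigenvalue_root_char_poly[OF A] that by blast
qed

lemma irr_rep_commuting_mat_scalar:
  assumes irr: "irr_rep G n \<rho>" and A: "A \<in> carrier_mat n n"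
    and comm: "\<And>g. g \<in> carrier G \<Longrightarrow> A * \<rho> g = \<rho> g * A"
  shows "\<exists>e. A = e \<cdot>\<^sub>m 1\<^sub>m n"
proof -
  have "n > 0" and \<rho>: "\<And>g. g \<in> carrier G \<Longrightarrow> \<rho> g \<in> carrier_mat n n"
    and simple: "\<And>W. invariant_subspace G n \<rho> W \<Longrightarrow> W = {0\<^sub>v n} \<or> W = carrier_vec n"
    using irr unfolding irr_rep_def rep_def by auto
  obtain e where "eigenvalue A e"
    using mat_has_eigenvalue[OF A \<open>n > 0\<close>] .
  then obtain v where v: "v \<in> carrier_vec n" "v \<noteq> 0\<^sub>v n" "A *\<^sub>v v = e \<cdot>\<^sub>v v"
    using A unfolding eigenvalue_def eigenvector_def by auto
  define W where "W = {w \<in> carrier_vec n. A *\<^sub>v w = e \<cdot>\<^sub>v w}"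
  have "invariant_subspace G n \<rho> W"
    unfolding invariant_subspace_def
  proof (intro conjI ballI allI)
    fix g w
    assume g: "g \<in> carrier G" and "w \<in> W"
    then have w: "w \<in> carrier_vec n" "A *\<^sub>v w = e \<cdot>\<^sub>v w"
      by (auto simp: W_def)
    have "A *\<^sub>v (\<rho> g *\<^sub>v w) = \<rho> g *\<^sub>v (A *\<^sub>v w)"
      using A \<rho>[OF g] w comm[OF g] by (metis assoc_mult_mat_vec)
    also have "\<dots> = e \<cdot>\<^sub>v (\<rho> g *\<^sub>v w)"
      using \<rho>[OF g] w by (simp add: mult_mat_vec)
    finally show "\<rho> g *\<^sub>v w \<in> W"
      using \<rho>[OF g] w by (simp add: W_def)
  qed (use A in \<open>auto simp: W_def mult_add_distrib_mat_vec smult_add_distrib_vec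
          mult_mat_vec smult_smult_assoc mult.commute\<close>)
  moreover have "v \<in> W"
    using v by (simp add: W_def)
  ultimately have eigen: "A *\<^sub>v w = e \<cdot>\<^sub>v w" if "w \<in> carrier_vec n" for w
    using simple v that by (auto simp: W_def)
  have "A = e \<cdot>\<^sub>m 1\<^sub>m n"
  proof (rule mat_col_eqI)
    fix j
    assume "j < dim_col (e \<cdot>\<^sub>m 1\<^sub>m n)"
    then have "j < n"
      by simp
    have "col A j = col (A * 1\<^sub>m n) j"
      using A by simp
    also have "\<dots> = e \<cdot>\<^sub>v unit_vec n j"
      using col_mult2[OF A one_carrier_mat \<open>j < n\<close>] eigen \<open>j < n\<close> by simp
    finally show "col A j = col (e \<cdot>\<^sub>m 1\<^sub>m n) j"
      using \<open>j < n\<close> by simp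
  qed (use A in auto)
  then show ?thesis ..
qed

section \<open>Representations and their characters\<close>

definition character :: "('a, 'b) monoid_scheme \<Rightarrow> ('a \<Rightarrow> complex mat) \<Rightarrow> 'a \<Rightarrow> complex" where
  "character G \<rho> = (\<lambda>g. if g \<in> carrier G then mat_trace (\<rho> g) else 0)"

lemma Irr_iff: "\<chi> \<in> Irr G \<longleftrightarrow> (\<exists>n \<rho>. irr_rep G n \<rho> \<and> \<chi> = character G \<rho>)"
  unfolding Irr_def character_def by auto

locale group_rep = group G for G (structure) +
  fixes n :: nat and \<rho> :: "'a \<Rightarrow> complex mat"
  assumes is_rep: "rep G n \<rho>"
begin

lemma rep_carrier: "g \<in> carrier G \<Longrightarrow> \<rho> g \<in> carrier_mat n n"
  using is_rep by (simp add: rep_def)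

lemma rep_mult: "g \<in> carrier G \<Longrightarrow> h \<in> carrier G \<Longrightarrow> \<rho> (g \<otimes> h) = \<rho> g * \<rho> h"
  using is_rep by (simp add: rep_def)

lemma rep_one: "\<rho> \<one> = 1\<^sub>m n"
  using is_rep by (simp add: rep_def)

lemma rep_inv:
  assumes "g \<in> carrier G"
  shows "\<rho> (inv g) * \<rho> g = 1\<^sub>m n" and "\<rho> g * \<rho> (inv g) = 1\<^sub>m n"
  using rep_mult[of "inv g" g] rep_mult[of g "inv g"] assms by (simp_all add: rep_one)

lemma rep_pow: "g \<in> carrier G \<Longrightarrow> \<rho> (g [^] (k::nat)) = \<rho> g ^\<^sub>m k"
  by (induction k) (simp_all add: rep_one rep_mult carrier_matD[OF rep_carrier])

lemma rep_pow_order: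
  assumes "finite (carrier G)" and "g \<in> carrier G"
  shows "\<rho> g ^\<^sub>m Coset.order G = 1\<^sub>m n"
  using rep_pow[of g "Coset.order G"] pow_order_eq_1 assms by (simp add: rep_one)

lemma character_apply: "g \<in> carrier G \<Longrightarrow> character G \<rho> g = mat_trace (\<rho> g)"
  by (simp add: character_def)

lemma character_one: "character G \<rho> \<one> = n"
  by (simp add: character_def rep_one mat_trace_def)

lemma rep_scalar_if_character_norm:
  assumes "finite (carrier G)" and g: "g \<in> carrier G" and "cmod (character G \<rho> g) = n"
  shows "\<exists>c. \<rho> g = c \<cdot>\<^sub>m 1\<^sub>m n"
  using finite_order_trace_norm_imp_scalar[OF rep_carrier[OF g] rep_pow_order[OF assms(1) g]] assms
  by (simp add: order_gt_0_iff_finite character_apply)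

lemma char_kernel_character:
  assumes "finite (carrier G)"
  shows "char_kernel G (character G \<rho>) = {g \<in> carrier G. \<rho> g = 1\<^sub>m n}"
proof -
  have "character G \<rho> g = n \<longleftrightarrow> \<rho> g = 1\<^sub>m n" if g: "g \<in> carrier G" for g
  proof
    assume trace: "character G \<rho> g = n"
    then obtain c where c: "\<rho> g = c \<cdot>\<^sub>m 1\<^sub>m n"
      using rep_scalar_if_character_norm[OF assms g] by auto
    with trace g have "c * n = n"
      by (simp add: character_apply)
    with c show "\<rho> g = 1\<^sub>m n"
      by (cases "n = 0") (auto intro!: eq_matI)
  qed (simp add: character_apply g mat_trace_def)
  then show ?thesis
    unfolding char_kernel_def character_one by auto
qed

lemma char_center_character:
  assumes "finite (carrier G)"
  shows "char_center G (character G \<rho>) = {g \<in> carrier G. \<exists>c. \<rho> g = c \<cdot>\<^sub>m 1\<^sub>m n}"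
proof -
  have "cmod (character G \<rho> g) = n \<longleftrightarrow> (\<exists>c. \<rho> g = c \<cdot>\<^sub>m 1\<^sub>m n)" if g: "g \<in> carrier G" for g
  proof
    assume "\<exists>c. \<rho> g = c \<cdot>\<^sub>m 1\<^sub>m n"
    then obtain c where c: "\<rho> g = c \<cdot>\<^sub>m 1\<^sub>m n" ..
    have "c ^ Coset.order G = 1" if "n > 0"
    proof -
      have "upper_triangular (c \<cdot>\<^sub>m 1\<^sub>m n)"
        by auto
      then have "((c \<cdot>\<^sub>m 1\<^sub>m n) ^\<^sub>m Coset.order G) $$ (0, 0) = c ^ Coset.order G"
        using upper_triangular_pow[of "c \<cdot>\<^sub>m 1\<^sub>m n" n "Coset.order G"] that by simp
      then show ?thesis
        using rep_pow_order[OF assms g] c that by simp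
    qed
    then have "n = 0 \<or> cmod c = 1"
      using power_eq_1_iff order_gt_0_iff_finite assms by fastforce
    then show "cmod (character G \<rho> g) = n"
      using c g by (auto simp: character_apply norm_mult)
  qed (rule rep_scalar_if_character_norm[OF assms g])
  then show ?thesis
    unfolding char_center_def character_one by auto
qed

lemma subgroup_rep_kernel: "subgroup {g \<in> carrier G. \<rho> g = 1\<^sub>m n} G"
proof (rule subgroupI)
  fix g
  assume "g \<in> {g \<in> carrier G. \<rho> g = 1\<^sub>m n}"
  then show "inv g \<in> {g \<in> carrier G. \<rho> g = 1\<^sub>m n}"
    using rep_inv(1)[of g] rep_carrier[of "inv g"] by simp
qed (auto simp: rep_one rep_mult)

lemma subgroup_rep_scalars: "subgroup {g \<in> carrier G. \<exists>c. \<rho> g = c \<cdot>\<^sub>m 1\<^sub>m n} G"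
proof (rule subgroupI)
  fix g
  assume "g \<in> {g \<in> carrier G. \<exists>c. \<rho> g = c \<cdot>\<^sub>m 1\<^sub>m n}"
  then obtain c where g: "g \<in> carrier G" and c: "\<rho> g = c \<cdot>\<^sub>m 1\<^sub>m n"
    by auto
  have "c \<cdot>\<^sub>m \<rho> (inv g) = 1\<^sub>m n"
    using rep_inv(1)[OF g] c scalar_mat_mult(2)[OF rep_carrier[of "inv g"]] g by simp
  then have "\<rho> (inv g) = inverse c \<cdot>\<^sub>m 1\<^sub>m n"
    using g by (intro smult_eq_one_mat_imp_scalar rep_carrier) auto
  with g show "inv g \<in> {g \<in> carrier G. \<exists>c. \<rho> g = c \<cdot>\<^sub>m 1\<^sub>m n}"
    by auto
next
  fix g h
  assume "g \<in> {g \<in> carrier G. \<exists>c. \<rho> g = c \<cdot>\<^sub>m 1\<^sub>m n}" "h \<in> {g \<in> carrier G. \<exists>c. \<rho> g = c \<cdot>\<^sub>m 1\<^sub>m n}"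
  then obtain c d where "g \<in> carrier G" "\<rho> g = c \<cdot>\<^sub>m 1\<^sub>m n" "h \<in> carrier G" "\<rho> h = d \<cdot>\<^sub>m 1\<^sub>m n"
    by auto
  then show "g \<otimes> h \<in> {g \<in> carrier G. \<exists>c. \<rho> g = c \<cdot>\<^sub>m 1\<^sub>m n}"
    by (auto simp: rep_mult scalar_mat_mult(1) intro!: exI[of _ "c * d"])
next
  have "\<rho> \<one> = 1 \<cdot>\<^sub>m 1\<^sub>m n"
    by (auto simp: rep_one)
  then show "{g \<in> carrier G. \<exists>c. \<rho> g = c \<cdot>\<^sub>m 1\<^sub>m n} \<noteq> {}"
    by blast
qed auto

lemma rep_commutator_eq_one_iff:
  assumes h: "h \<in> carrier G" and g: "g \<in> carrier G"
  shows "\<rho> (h \<otimes> g \<otimes> inv h \<otimes> inv g) = 1\<^sub>m n \<longleftrightarrow> \<rho> h * \<rho> g = \<rho> g * \<rho> h"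
proof -
  have "h \<otimes> g \<otimes> inv h \<otimes> inv g = (h \<otimes> g) \<otimes> inv (g \<otimes> h)"
    using h g by (simp add: m_assoc inv_mult_group)
  then have "\<rho> (h \<otimes> g \<otimes> inv h \<otimes> inv g) = \<rho> (h \<otimes> g) * \<rho> (inv (g \<otimes> h))"
    using h g by (simp add: rep_mult)
  moreover have "\<rho> (h \<otimes> g) * \<rho> (inv (g \<otimes> h)) = 1\<^sub>m n \<longleftrightarrow> \<rho> (h \<otimes> g) = \<rho> (g \<otimes> h)"
  proof
    assume right_inv: "\<rho> (h \<otimes> g) * \<rho> (inv (g \<otimes> h)) = 1\<^sub>m n"
    have "\<rho> (h \<otimes> g) = \<rho> (h \<otimes> g) * (\<rho> (inv (g \<otimes> h)) * \<rho> (g \<otimes> h))"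
      using rep_inv(1)[of "g \<otimes> h"] h g by (simp add: carrier_matD[OF rep_carrier])
    also have "\<dots> = (\<rho> (h \<otimes> g) * \<rho> (inv (g \<otimes> h))) * \<rho> (g \<otimes> h)"
      by (rule assoc_mult_mat[of _ n n _ n _ n, symmetric]) (use h g in \<open>simp_all add: rep_carrier\<close>)
    finally show "\<rho> (h \<otimes> g) = \<rho> (g \<otimes> h)"
      using right_inv h g by (simp add: carrier_matD[OF rep_carrier])
  qed (use rep_inv(2)[of "g \<otimes> h"] h g in simp)
  ultimately show ?thesis
    using h g by (simp add: rep_mult)
qed

end

section \<open>Commutator subgroups\<close>

lemma (in group) inv_mult_cancel_left:
  assumes "x \<in> carrier G" "y \<in> carrier G"
  shows "inv x \<otimes> (x \<otimes> y) = y" and "x \<otimes> (inv x \<otimes> y) = y"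
  using assms by (simp_all add: m_assoc[symmetric])

lemma (in group) normal_generate_if_conj_closed:
  assumes S: "S \<subseteq> carrier G"
    and conj: "\<And>s g. s \<in> S \<Longrightarrow> g \<in> carrier G \<Longrightarrow> g \<otimes> s \<otimes> inv g \<in> generate G S"
  shows "generate G S \<lhd> G"
proof (rule normal_invI[OF generate_is_subgroup[OF S]])
  fix g x
  assume g: "g \<in> carrier G"
  assume "x \<in> generate G S"
  then show "g \<otimes> x \<otimes> inv g \<in> generate G S"
  proof (induction x rule: generate.induct)
    case one
    show ?case
      using generate.one g by simp
  next
    case (incl s)
    then show ?case
      using conj g by blast
  next
    case (inv s)
    then have "g \<otimes> inv s \<otimes> inv g = inv (g \<otimes> s \<otimes> inv g)"
      using S g by (auto simp: inv_mult_group m_assoc)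
    then show ?case
      using generate_m_inv_closed[OF S conj[OF inv g]] by simp
  next
    case (eng x y)
    then have "g \<otimes> (x \<otimes> y) \<otimes> inv g = (g \<otimes> x \<otimes> inv g) \<otimes> (g \<otimes> y \<otimes> inv g)"
      using generate_in_carrier[OF S] g by (simp add: m_assoc inv_mult_cancel_left)
    then show ?case
      using eng generate.eng by simp
  qed
qed

lemma (in group) commutator_subgroup_normal:
  assumes "H \<subseteq> carrier G"
  shows "commutator_subgroup G H (carrier G) \<lhd> G"
  unfolding commutator_subgroup_def
proof (rule normal_generate_if_conj_closed)
  fix s g
  assume "s \<in> (\<Union>h\<in>H. \<Union>k\<in>carrier G. {h \<otimes> k \<otimes> inv h \<otimes> inv k})" and g: "g \<in> carrier G"
  then obtain h k where "h \<in> H" and k: "k \<in> carrier G" and s: "s = h \<otimes> k \<otimes> inv h \<otimes> inv k"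
    by blast
  let ?gens = "\<Union>h\<in>H. \<Union>k\<in>carrier G. {h \<otimes> k \<otimes> inv h \<otimes> inv k}"
  have h: "h \<in> carrier G"
    using assms \<open>h \<in> H\<close> by blast
  have "h \<otimes> g \<otimes> inv h \<otimes> inv g \<in> ?gens" "h \<otimes> (g \<otimes> k) \<otimes> inv h \<otimes> inv (g \<otimes> k) \<in> ?gens"
    using \<open>h \<in> H\<close> g k by blast+
  then have "inv (h \<otimes> g \<otimes> inv h \<otimes> inv g) \<otimes> (h \<otimes> (g \<otimes> k) \<otimes> inv h \<otimes> inv (g \<otimes> k))
      \<in> generate G ?gens"
    by (intro generate.eng generate.inv generate.incl)
  moreover have "g \<otimes> s \<otimes> inv g
      = inv (h \<otimes> g \<otimes> inv h \<otimes> inv g) \<otimes> (h \<otimes> (g \<otimes> k) \<otimes> inv h \<otimes> inv (g \<otimes> k))"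
    using h k g by (simp add: s m_assoc inv_mult_group inv_mult_cancel_left)
  ultimately show "g \<otimes> s \<otimes> inv g \<in> generate G ?gens"
    by simp
qed (use assms in auto)

lemma (in group) commutator_subgroup_mono:
  "H \<subseteq> H' \<Longrightarrow> commutator_subgroup G H K \<subseteq> commutator_subgroup G H' K"
  unfolding commutator_subgroup_def by (rule mono_generate) auto

section \<open>Irreducible characters of finite groups\<close>

locale finite_group = group G for G (structure) +
  assumes finite_carrier: "finite (carrier G)"

context finite_group
begin

lemma IrrE:
  assumes "\<chi> \<in> Irr G"
  obtains n \<rho> where "irr_rep G n \<rho>" "group_rep G n \<rho>" "\<chi> = character G \<rho>"
proof -
  obtain n \<rho> where "irr_rep G n \<rho>" "\<chi> = character G \<rho>"
    using assms by (auto simp: Irr_iff)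
  moreover from this have "group_rep G n \<rho>"
    by (simp add: group_rep_def group_rep_axioms_def irr_rep_def is_group)
  ultimately show ?thesis
    using that by blast
qed

lemma subgroup_char_center:
  assumes "\<chi> \<in> Irr G"
  shows "subgroup (char_center G \<chi>) G"
proof -
  obtain n \<rho> where "group_rep G n \<rho>" and \<chi>: "\<chi> = character G \<rho>"
    using IrrE[OF assms] .
  interpret group_rep G n \<rho> by fact
  show ?thesis
    using subgroup_rep_scalars by (simp add: \<chi> char_center_character[OF finite_carrier])
qed

lemma commutator_subgroup_subset_char_kernel_iff:
  assumes "\<chi> \<in> Irr G" and H: "H \<subseteq> carrier G"
  shows "commutator_subgroup G H (carrier G) \<subseteq> char_kernel G \<chi> \<longleftrightarrow> H \<subseteq> char_center G \<chi>"
proof -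
  obtain n \<rho> where irr: "irr_rep G n \<rho>" and "group_rep G n \<rho>" and \<chi>: "\<chi> = character G \<rho>"
    using IrrE[OF assms(1)] .
  interpret group_rep G n \<rho> by fact
  let ?gens = "\<Union>h\<in>H. \<Union>g\<in>carrier G. {h \<otimes> g \<otimes> inv h \<otimes> inv g}"
  let ?K = "{g \<in> carrier G. \<rho> g = 1\<^sub>m n}"
  have "commutator_subgroup G H (carrier G) \<subseteq> ?K \<longleftrightarrow> ?gens \<subseteq> ?K"
  proof
    assume "commutator_subgroup G H (carrier G) \<subseteq> ?K"
    then show "?gens \<subseteq> ?K"
      unfolding commutator_subgroup_def using generate.incl[of _ ?gens G] by blast
  next
    assume "?gens \<subseteq> ?K"
    then show "commutator_subgroup G H (carrier G) \<subseteq> ?K"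
      unfolding commutator_subgroup_def by (rule generate_subgroup_incl[OF _ subgroup_rep_kernel])
  qed
  also have "\<dots> \<longleftrightarrow> (\<forall>h\<in>H. \<forall>g\<in>carrier G. \<rho> h * \<rho> g = \<rho> g * \<rho> h)"
  proof -
    have "h \<otimes> g \<otimes> inv h \<otimes> inv g \<in> ?K \<longleftrightarrow> \<rho> h * \<rho> g = \<rho> g * \<rho> h"
      if "h \<in> H" "g \<in> carrier G" for h g
      using that H rep_commutator_eq_one_iff[of h g] by auto
    then show ?thesis
      by (simp add: UN_subset_iff)
  qed
  also have "\<dots> \<longleftrightarrow> H \<subseteq> {g \<in> carrier G. \<exists>c. \<rho> g = c \<cdot>\<^sub>m 1\<^sub>m n}"
  proof
    assume "\<forall>h\<in>H. \<forall>g\<in>carrier G. \<rho> h * \<rho> g = \<rho> g * \<rho> h"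
    then show "H \<subseteq> {g \<in> carrier G. \<exists>c. \<rho> g = c \<cdot>\<^sub>m 1\<^sub>m n}"
      using H irr_rep_commuting_mat_scalar[OF irr rep_carrier] by blast
  next
    assume "H \<subseteq> {g \<in> carrier G. \<exists>c. \<rho> g = c \<cdot>\<^sub>m 1\<^sub>m n}"
    then show "\<forall>h\<in>H. \<forall>g\<in>carrier G. \<rho> h * \<rho> g = \<rho> g * \<rho> h"
      by (auto simp: scalar_mat_mult rep_carrier)
  qed
  finally show ?thesis
    unfolding \<chi> char_kernel_character[OF finite_carrier] char_center_character[OF finite_carrier] .
qed

end

lemma (in normal) irr_rep_inflation:
  assumes irr: "irr_rep (G Mod H) n \<sigma>"
  shows "irr_rep G n (\<lambda>g. \<sigma> (H #> g))"
proof -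
  interpret Q: group_rep "G Mod H" n \<sigma>
    using irr factorgroup_is_group by (simp add: irr_rep_def group_rep_def group_rep_axioms_def)
  have coset: "H #> g \<in> carrier (G Mod H)" if "g \<in> carrier G" for g
    using that subset by (simp add: FactGroup_def rcosetsI)
  have carrier_Mod: "carrier (G Mod H) = (\<lambda>g. H #> g) ` carrier G"
    by (auto simp: FactGroup_def RCOSETS_def)
  have "rep G n (\<lambda>g. \<sigma> (H #> g))"
    unfolding rep_def
  proof (intro conjI ballI)
    fix g h
    assume "g \<in> carrier G" "h \<in> carrier G"
    then show "\<sigma> (H #> (g \<otimes> h)) = \<sigma> (H #> g) * \<sigma> (H #> h)"
      using Q.rep_mult[OF coset coset] rcos_sum by (simp add: FactGroup_def)
  next
    show "\<sigma> (H #> \<one>) = 1\<^sub>m n"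
      using Q.rep_one coset_mult_one[OF subset] by (simp add: FactGroup_def)
  qed (use Q.rep_carrier coset in blast)
  moreover have "W = {0\<^sub>v n} \<or> W = carrier_vec n"
    if "invariant_subspace G n (\<lambda>g. \<sigma> (H #> g)) W" for W
  proof -
    have "invariant_subspace (G Mod H) n \<sigma> W"
      using that unfolding invariant_subspace_def carrier_Mod by blast
    then show ?thesis
      using irr by (simp add: irr_rep_def)
  qed
  ultimately show ?thesis
    using irr by (simp add: irr_rep_def)
qed

lemma (in normal) Irr_FactGroupE:
  assumes "\<chi>' \<in> Irr (G Mod H)"
  obtains \<chi> where "\<chi> \<in> Irr G" and "H \<subseteq> char_kernel G \<chi>"
    and "char_center (G Mod H) \<chi>' = (\<lambda>g. H #> g) ` char_center G \<chi>"
proof -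
  obtain n \<sigma> where irr: "irr_rep (G Mod H) n \<sigma>" and \<chi>': "\<chi>' = character (G Mod H) \<sigma>"
    using assms by (auto simp: Irr_iff)
  define \<chi> where "\<chi> = character G (\<lambda>g. \<sigma> (H #> g))"
  have "\<chi> \<in> Irr G"
    using irr_rep_inflation[OF irr] by (auto simp: Irr_iff \<chi>_def)
  have carrier_Mod: "carrier (G Mod H) = (\<lambda>g. H #> g) ` carrier G"
    by (auto simp: FactGroup_def RCOSETS_def)
  have \<chi>_apply: "\<chi> g = \<chi>' (H #> g)" if "g \<in> carrier G" for g
    using that by (auto simp: \<chi>_def \<chi>' character_def carrier_Mod)
  have one_Mod: "\<one>\<^bsub>G Mod H\<^esub> = H #> \<one>"
    using coset_mult_one[OF subset] by (simp add: FactGroup_def)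
  have "H \<subseteq> char_kernel G \<chi>"
    using subset rcos_const \<chi>_apply one_Mod by (auto simp: char_kernel_def)
  moreover have "char_center (G Mod H) \<chi>' = (\<lambda>g. H #> g) ` char_center G \<chi>"
    using \<chi>_apply one_Mod by (auto simp: char_center_def carrier_Mod)
  ultimately show ?thesis
    using that \<open>\<chi> \<in> Irr G\<close> by blast
qed

section \<open>The chain of the subgroups delta i\<close>

lemma antimono_finite_set_eventually_const:
  fixes A :: "nat \<Rightarrow> 'a set"
  assumes "antimono A" and "finite (A 0)"
  shows "\<exists>K. \<forall>j\<ge>K. A j = A K"
proof -
  obtain K where K: "\<And>k. card (A K) \<le> card (A k)"
    using ex_has_least_nat[of "\<lambda>_. True" 0 "\<lambda>k. card (A k)"] by blast
  have "A j = A K" if "K \<le> j" for j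
  proof -
    have "A j \<subseteq> A K" "A K \<subseteq> A 0"
      using assms(1) that by (auto simp: antimono_def)
    then show ?thesis
      using K[of j] assms(2) by (meson card_mono card_subset_eq finite_subset le_antisym)
  qed
  then show ?thesis
    by blast
qed

lemma delta_one [simp]: "delta G (Suc 0) = carrier G"
  by simp

lemma delta_Suc:
  "1 \<le> i \<Longrightarrow> delta G (Suc i) =
    generate G (\<Union>\<chi>\<in>Irr_over G (commutator_subgroup G (delta G i) (carrier G)). char_center G \<chi>)"
  by simp

declare delta.simps(2) [simp del]

lemma (in group) delta_subset_carrier: "delta G k \<subseteq> carrier G"
proof (cases "k \<le> 1")
  case True
  then show ?thesis
    by (cases k) auto
next
  case False
  then obtain i where "k = Suc i" "1 \<le> i"
    by (cases k) auto
  then show ?thesis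
    by (auto simp: delta_Suc char_center_def intro!: generate_incl)
qed

lemma (in group) delta_Suc_subset: "delta G (Suc i) \<subseteq> delta G i"
proof (induction i)
  case (Suc i)
  show ?case
  proof (cases "i = 0")
    case True
    then show ?thesis
      using delta_subset_carrier[of "Suc (Suc 0)"] by simp
  next
    case False
    have "Irr_over G (commutator_subgroup G (delta G (Suc i)) (carrier G))
        \<subseteq> Irr_over G (commutator_subgroup G (delta G i) (carrier G))"
      using commutator_subgroup_mono[OF Suc.IH] by (auto simp: Irr_over_def)
    moreover have "delta G (Suc (Suc i)) =
        generate G (\<Union>\<chi>\<in>Irr_over G (commutator_subgroup G (delta G (Suc i)) (carrier G)). char_center G \<chi>)"
      by (simp add: delta_Suc)
    moreover have "delta G (Suc i) =
        generate G (\<Union>\<chi>\<in>Irr_over G (commutator_subgroup G (delta G i) (carrier G)). char_center G \<chi>)"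
      using False by (simp add: delta_Suc)
    ultimately show ?thesis
      by (metis UN_mono mono_generate order_refl)
  qed
qed simp

lemma (in group) antimono_delta: "antimono (delta G)"
  unfolding antimono_iff_le_Suc using delta_Suc_subset by blast

lemma (in group) chain_delta: "chain\<^sub>\<subseteq> (range (delta G))"
  using antimono_delta unfolding chain_subset_def antimono_def by (metis nle_le rangeE)

lemma nested_group_iff_chain: "nested_group G \<longleftrightarrow> chain\<^sub>\<subseteq> (char_center G ` Irr G)"
  unfolding nested_group_def chain_subset_def by blast

lemma nested_groupI:
  assumes "chain\<^sub>\<subseteq> \<C>" and "\<And>\<chi>. \<chi> \<in> Irr G \<Longrightarrow> char_center G \<chi> \<in> \<C>"
  shows "nested_group G"
  using assms unfolding nested_group_def chain_subset_def by blast

lemma chain_subset_subset: "chain\<^sub>\<subseteq> \<C> \<Longrightarrow> \<A> \<subseteq> \<C> \<Longrightarrow> chain\<^sub>\<subseteq> \<A>"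
  unfolding chain_subset_def by blast

lemma chain_subset_image_image: "chain\<^sub>\<subseteq> \<C> \<Longrightarrow> chain\<^sub>\<subseteq> ((\<lambda>A. f ` A) ` \<C>)"
  unfolding chain_subset_def by (blast intro: image_mono)

context finite_group
begin

lemma delta_inf_eq:
  obtains K where "1 \<le> K" and "delta_inf G = delta G K" and "delta G (Suc K) = delta G K"
proof -
  let ?P = "\<lambda>K. 1 \<le> K \<and> (\<forall>j\<ge>K. delta G j = delta G K)"
  define L where "L = (LEAST K. ?P K)"
  have "finite (delta G 0)"
    using finite_carrier by simp
  then have "\<exists>K0. \<forall>j\<ge>K0. delta G j = delta G K0"
    by (rule antimono_finite_set_eventually_const[OF antimono_delta])
  then obtain K0 where K0: "\<forall>j\<ge>K0. delta G j = delta G K0" ..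
  have "?P (Suc K0)"
  proof (intro conjI allI impI)
    fix j
    assume "Suc K0 \<le> j"
    then have "delta G j = delta G K0" "delta G (Suc K0) = delta G K0"
      using K0[rule_format, of j] K0[rule_format, of "Suc K0"] by simp_all
    then show "delta G j = delta G (Suc K0)"
      by simp
  qed simp
  then have "?P L"
    unfolding L_def by (rule LeastI)
  show ?thesis
  proof (rule that)
    show "1 \<le> L"
      using \<open>?P L\<close> by (rule conjunct1)
    show "delta_inf G = delta G L"
      unfolding delta_inf_def L_def ..
    show "delta G (Suc L) = delta G L"
      by (rule conjunct2[OF \<open>?P L\<close>, rule_format]) simp
  qed
qed

lemma char_center_in_range_delta:
  assumes \<chi>: "\<chi> \<in> Irr G" and "1 \<le> i"
    and "commutator_subgroup G (delta G i) (carrier G) \<subseteq> char_kernel G \<chi>"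
  shows "char_center G \<chi> \<in> range (delta G)"
proof -
  let ?P = "\<lambda>k. 1 \<le> k \<and> commutator_subgroup G (delta G k) (carrier G) \<subseteq> char_kernel G \<chi>"
  define k where "k = (LEAST k. ?P k)"
  have Pk: "?P k"
    unfolding k_def using assms by (intro LeastI[of ?P i]) auto
  then have "delta G k \<subseteq> char_center G \<chi>"
    using commutator_subgroup_subset_char_kernel_iff[OF \<chi> delta_subset_carrier] by blast
  moreover have "char_center G \<chi> \<subseteq> delta G k"
  proof (cases "k = 1")
    case True
    then show ?thesis
      by (simp add: char_center_def)
  next
    case False
    with Pk obtain j where j: "k = Suc j" "1 \<le> j"
      by (cases k) auto
    then have "\<not> ?P j"
      using not_less_Least[of j ?P] by (simp add: k_def)
    with j \<chi> have "\<chi> \<in> Irr_over G (commutator_subgroup G (delta G j) (carrier G))"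
      by (simp add: Irr_over_def)
    then show ?thesis
      using j by (auto simp: delta_Suc intro: generate.incl)
  qed
  ultimately show ?thesis
    by (metis rangeI subset_antisym)
qed

lemma nested_group_FactGroup_commutator_delta:
  assumes "1 \<le> i"
  shows "nested_group (G Mod commutator_subgroup G (delta G i) (carrier G))"
proof -
  let ?N = "commutator_subgroup G (delta G i) (carrier G)"
  interpret N: normal ?N G
    using commutator_subgroup_normal[OF delta_subset_carrier] .
  show ?thesis
  proof (rule nested_groupI[OF chain_subset_image_image[OF chain_delta, of "\<lambda>g. ?N #> g"]])
    fix \<chi>'
    assume "\<chi>' \<in> Irr (G Mod ?N)"
    then obtain \<chi> where \<chi>: "\<chi> \<in> Irr G" and ker: "?N \<subseteq> char_kernel G \<chi>"
      and center: "char_center (G Mod ?N) \<chi>' = (\<lambda>g. ?N #> g) ` char_center G \<chi>"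
      by (rule N.Irr_FactGroupE)
    have "char_center G \<chi> \<in> range (delta G)"
      by (rule char_center_in_range_delta[OF \<chi> assms ker])
    then show "char_center (G Mod ?N) \<chi>' \<in> (\<lambda>A. (\<lambda>g. ?N #> g) ` A) ` range (delta G)"
      unfolding center by (rule imageI)
  qed
qed

lemma nested_group_if_delta_inf_trivial:
  assumes "delta_inf G = {\<one>}"
  shows "nested_group G"
proof (rule nested_groupI[OF chain_delta])
  fix \<chi>
  assume \<chi>: "\<chi> \<in> Irr G"
  obtain K where K: "1 \<le> K" "delta_inf G = delta G K"
    by (metis delta_inf_eq)
  have "{\<one>} \<subseteq> char_center G \<chi>"
    using subgroup.one_closed[OF subgroup_char_center[OF \<chi>]] by simp
  then have "commutator_subgroup G (delta G K) (carrier G) \<subseteq> char_kernel G \<chi>"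
    using commutator_subgroup_subset_char_kernel_iff[OF \<chi>] assms K(2) by simp
  then show "char_center G \<chi> \<in> range (delta G)"
    by (rule char_center_in_range_delta[OF \<chi> K(1)])
qed

lemma nested_group_Union_char_center_mem:
  assumes "nested_group G" and "S \<subseteq> Irr G" and "S \<noteq> {}"
  obtains \<chi> where "\<chi> \<in> S" and "\<Union> (char_center G ` S) = char_center G \<chi>"
proof -
  have "chain\<^sub>\<subseteq> (char_center G ` Irr G)"
    using assms(1) by (simp add: nested_group_iff_chain)
  then have "chain\<^sub>\<subseteq> (char_center G ` S)"
    using assms(2) by (metis chain_subset_subset image_mono)
  moreover have "finite (char_center G ` S)"
    by (rule finite_subset[of _ "Pow (carrier G)"]) (auto simp: char_center_def finite_carrier)
  ultimately have "\<Union> (char_center G ` S) \<in> char_center G ` S"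
    using Union_in_chain[of "char_center G ` S" UNIV] assms(3) by (simp add: chain_subset_alt_def)
  then show ?thesis
    using that unfolding image_iff by blast
qed

lemma delta_inf_trivial_if_nested:
  assumes "nested_group G"
  shows "delta_inf G = {\<one>}"
proof -
  obtain K where K: "1 \<le> K" "delta_inf G = delta G K" "delta G (Suc K) = delta G K"
    by (rule delta_inf_eq)
  define S where "S = Irr_over G (commutator_subgroup G (delta G K) (carrier G))"
  have "delta G K = delta G (Suc K)"
    by (rule K(3)[symmetric])
  also have "\<dots> = generate G (\<Union> (char_center G ` S))"
    unfolding S_def by (rule delta_Suc[OF K(1)])
  finally have delta_K: "delta G K = generate G (\<Union> (char_center G ` S))" .
  show ?thesis
  proof (cases "S = {}")
    case True
    then show ?thesis
      using delta_K K(2) generate_empty by simp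
  next
    case False
    have "S \<subseteq> Irr G"
      by (auto simp: S_def Irr_over_def)
    then obtain \<chi> where \<chi>: "\<chi> \<in> S" "\<Union> (char_center G ` S) = char_center G \<chi>"
      using nested_group_Union_char_center_mem[OF assms _ False] by blast
    then have "\<chi> \<in> Irr G"
      by (simp add: S_def Irr_over_def)
    have "delta G K \<subseteq> char_center G \<chi>"
      unfolding delta_K \<chi>(2)
      using subgroup_char_center[OF \<open>\<chi> \<in> Irr G\<close>] by (rule generate_subgroup_incl[OF subset_refl])
    then have "commutator_subgroup G (delta G K) (carrier G) \<subseteq> char_kernel G \<chi>"
      by (rule iffD2[OF commutator_subgroup_subset_char_kernel_iff[OF \<open>\<chi> \<in> Irr G\<close> delta_subset_carrier]])
    with \<chi>(1) show ?thesis
      by (simp add: S_def Irr_over_def)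
  qed
qed

end

theorem theoremG:
  fixes G :: "('a, 'b) monoid_scheme"
  assumes "group G" and "finite (carrier G)"
  shows "(\<forall>i::nat. i \<ge> 1 \<longrightarrow>
            nested_group (G Mod (commutator_subgroup G (delta G i) (carrier G))))
       \<and> (nested_group G \<longleftrightarrow> delta_inf G = {\<one>\<^bsub>G\<^esub>})"
proof -
  interpret finite_group G
    using assms by (simp add: finite_group_def finite_group_axioms_def)
  show ?thesis
    using nested_group_FactGroup_commutator_delta nested_group_if_delta_inf_trivial
      delta_inf_trivial_if_nested by blast
qed

end
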